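(* Let $G$ be a connected graph of order $n\geq 4$ and let $k$ be an integer with $3\leq k\leq n$. Then $px_k(G)=n-1$ if and only if $G\cong S_n$, the star on $n$ vertices.
   Context: All graphs are finite, simple, undirected and connected. An edge-coloring of a graph assigns a color to each edge (adjacent edges may receive the same color). A tree in an edge-colored graph is proper if any two adjacent edges of the tree receive different colors. For $S\subseteq V(G)$, an $S$-tree is a subgraph of $G$ that is a tree containing all vertices of $S$. For a connected graph $G$ of order $n$ and an integer $k$ with $2\le k\le n$, an edge-coloring of $G$ is a $k$-proper coloring if for every set $S$ of $k$ vertices of $G$ there exists a proper $S$-tree in $G$. The $k$-proper index $px_k(G)$ is the minimum number of colors used in a $k$-proper coloring of $G$. The star $S_n$ is the tree $K_{1,n-1}$ on $n$ vertices. *)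

theory Defs
  imports Main
begin

definition graph :: "'a set \<Rightarrow> 'a set set \<Rightarrow> bool" where
  "graph V E \<longleftrightarrow> finite V \<and> (\<forall>e\<in>E. \<exists>x y. e = {x, y} \<and> x \<noteq> y \<and> x \<in> V \<and> y \<in> V)"

definition adj_rel :: "'a set set \<Rightarrow> ('a \<times> 'a) set" where
  "adj_rel E = {(x, y). {x, y} \<in> E}"

definition connected_graph :: "'a set \<Rightarrow> 'a set set \<Rightarrow> bool" where
  "connected_graph V E \<longleftrightarrow> V \<noteq> {} \<and> (\<forall>u\<in>V. \<forall>v\<in>V. (u, v) \<in> (adj_rel E)\<^sup>*)"

definition is_subtree :: "'a set \<Rightarrow> 'a set set \<Rightarrow> 'a set \<Rightarrow> 'a set set \<Rightarrow> bool" where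
  "is_subtree V E V' E' \<longleftrightarrow> V' \<subseteq> V \<and> E' \<subseteq> E \<and> (\<forall>e\<in>E'. e \<subseteq> V')
     \<and> connected_graph V' E' \<and> card E' + 1 = card V'"

definition proper_edges :: "('a set \<Rightarrow> 'c) \<Rightarrow> 'a set set \<Rightarrow> bool" where
  "proper_edges c E' \<longleftrightarrow> (\<forall>e1\<in>E'. \<forall>e2\<in>E'. e1 \<noteq> e2 \<and> e1 \<inter> e2 \<noteq> {} \<longrightarrow> c e1 \<noteq> c e2)"

definition k_proper_coloring :: "nat \<Rightarrow> 'a set \<Rightarrow> 'a set set \<Rightarrow> ('a set \<Rightarrow> nat) \<Rightarrow> bool" where
  "k_proper_coloring k V E c \<longleftrightarrow>
     (\<forall>S. S \<subseteq> V \<and> card S = k \<longrightarrow>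
        (\<exists>V' E'. is_subtree V E V' E' \<and> S \<subseteq> V' \<and> proper_edges c E'))"

definition proper_index :: "nat \<Rightarrow> 'a set \<Rightarrow> 'a set set \<Rightarrow> nat" where
  "proper_index k V E = (LEAST m. \<exists>c. k_proper_coloring k V E c \<and> card (c ` E) = m)"

definition graph_iso :: "'a set \<Rightarrow> 'a set set \<Rightarrow> 'b set \<Rightarrow> 'b set set \<Rightarrow> bool" where
  "graph_iso V E V' E' \<longleftrightarrow> (\<exists>f. bij_betw f V V' \<and>
     (\<forall>x\<in>V. \<forall>y\<in>V. {x, y} \<in> E \<longleftrightarrow> {f x, f y} \<in> E'))"

definition star_vertices :: "nat \<Rightarrow> nat set" where
  "star_vertices n = {0..<n}"

definition star_edges :: "nat \<Rightarrow> nat set set" where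
  "star_edges n = {{0, i} | i. 0 < i \<and> i < n}"

end

theory Submission
  imports Defs
begin

text \<open>A star with centre z forces every k-proper colouring (2 \<le> k) to be injective on
  its n - 1 edges: any tree through two leaves x, y must use both edges zx and zy,
  which are adjacent. Conversely, a connected graph on n \<ge> 4 vertices that is not a star
  has a spanning tree with two disjoint edges: either some spanning tree already has
  them, or the edges of a spanning tree pairwise meet, hence share a vertex v (a
  pairwise intersecting family of edges covering at least four vertices is a star), and
  then an edge uw avoiding v lets us trade vw for uw. Colouring those two disjoint edges
  alike and all others distinctly gives a k-proper colouring with n - 2 colours.\<close>

lemma ex_subset_card_between:
  assumes "finite V" "A \<subseteq> V" "card A \<le> k" "k \<le> card V"
  obtains S where "A \<subseteq> S" "S \<subseteq> V" "card S = k"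
proof -
  have "finite A" using assms(1,2) finite_subset by blast
  have "k - card A \<le> card (V - A)"
    using assms by (simp add: card_Diff_subset \<open>finite A\<close>)
  then obtain S0 where S0: "S0 \<subseteq> V - A" "card S0 = k - card A"
    by (meson obtain_subset_with_card_n)
  have "finite S0" "A \<inter> S0 = {}" using S0(1) assms(1) finite_subset by auto
  then have "card (A \<union> S0) = card A + card S0"
    using \<open>finite A\<close> by (simp add: card_Un_disjoint)
  then have "card (A \<union> S0) = k" using S0(2) assms(3) by simp
  moreover have "A \<subseteq> A \<union> S0" "A \<union> S0 \<subseteq> V" using S0(1) assms(2) by auto
  ultimately show thesis using that by blast
qed

lemma graph_edge_doubleton:
  "graph V E \<Longrightarrow> e \<in> E \<Longrightarrow> \<exists>a b. e = {a, b} \<and> a \<noteq> b \<and> a \<in> V \<and> b \<in> V"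
  unfolding graph_def by blast

lemma graph_edge_subset: "graph V E \<Longrightarrow> e \<in> E \<Longrightarrow> e \<subseteq> V"
  by (fastforce simp: graph_def)

lemma graph_finite_edges:
  assumes "graph V E"
  shows "finite E"
proof -
  have "E \<subseteq> Pow V" using graph_edge_subset[OF assms] by blast
  then show ?thesis using assms finite_subset unfolding graph_def by blast
qed

lemma adj_rel_iff [simp]: "(x, y) \<in> adj_rel E \<longleftrightarrow> {x, y} \<in> E"
  by (simp add: adj_rel_def)

lemma adj_rel_rtrancl_sym: "(x, y) \<in> (adj_rel E)\<^sup>* \<Longrightarrow> (y, x) \<in> (adj_rel E)\<^sup>*"
proof -
  have "(adj_rel E)\<inverse> = adj_rel E"
    by (auto simp: adj_rel_def insert_commute)
  then show "(x, y) \<in> (adj_rel E)\<^sup>* \<Longrightarrow> (y, x) \<in> (adj_rel E)\<^sup>*"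
    by (metis rtrancl_converseI)
qed

lemma connected_graph_if_hub:
  assumes "h \<in> W" "\<And>a. a \<in> W \<Longrightarrow> (a, h) \<in> (adj_rel F)\<^sup>*"
  shows "connected_graph W F"
  unfolding connected_graph_def
proof (intro conjI ballI)
  fix a b assume "a \<in> W" "b \<in> W"
  then show "(a, b) \<in> (adj_rel F)\<^sup>*"
    using assms(2) adj_rel_rtrancl_sym rtrancl_trans by metis
qed (use assms(1) in blast)

lemma connected_graph_crossing_edge:
  assumes g: "graph V E" and c: "connected_graph V E"
    and "W \<subseteq> V" "u \<in> W" "v \<in> V - W"
  obtains x y where "x \<in> W" "y \<in> V - W" "{x, y} \<in> E"
proof -
  have "(u, v) \<in> (adj_rel E)\<^sup>*"
    using assms unfolding connected_graph_def by auto
  then have "v \<notin> W \<longrightarrow> (\<exists>x\<in>W. \<exists>y\<in>V - W. {x, y} \<in> E)"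
  proof (induction rule: rtrancl_induct)
    case base
    then show ?case using \<open>u \<in> W\<close> by blast
  next
    case (step b d)
    then have "{b, d} \<in> E" by simp
    moreover have "d \<in> V"
      using graph_edge_subset[OF g \<open>{b, d} \<in> E\<close>] by blast
    ultimately show ?case using step.IH by blast
  qed
  then show thesis using that \<open>v \<in> V - W\<close> by blast
qed

lemma is_subtree_extend:
  assumes g: "graph V E" and c: "connected_graph V E"
    and t: "is_subtree V E W T" and "W \<noteq> V"
  obtains W' T' where "is_subtree V E W' T'" "card W' = Suc (card W)"
proof -
  have sub: "W \<subseteq> V" "T \<subseteq> E" "\<forall>e\<in>T. e \<subseteq> W" "connected_graph W T" "card T + 1 = card W"
    using t unfolding is_subtree_def by auto
  obtain u where u: "u \<in> W"
    using sub(4) unfolding connected_graph_def by blast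
  obtain v where "v \<in> V - W" using sub(1) \<open>W \<noteq> V\<close> by blast
  then obtain x y where xy: "x \<in> W" "y \<in> V - W" "{x, y} \<in> E"
    using connected_graph_crossing_edge[OF g c sub(1) u] by blast
  have fW: "finite W"
    using g sub(1) finite_subset unfolding graph_def by blast
  have fT: "finite T"
    using graph_finite_edges[OF g] sub(2) finite_subset by blast
  have new_edge: "{x, y} \<notin> T" using sub(3) xy(2) by blast
  have "(a, x) \<in> (adj_rel (insert {x, y} T))\<^sup>*" if "a \<in> insert y W" for a
  proof (cases "a = y")
    case True
    then show ?thesis by (simp add: insert_commute r_into_rtrancl)
  next
    case False
    then have "(a, x) \<in> (adj_rel T)\<^sup>*"
      using that sub(4) xy(1) unfolding connected_graph_def by blast
    moreover have "adj_rel T \<subseteq> adj_rel (insert {x, y} T)"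
      by (auto simp: adj_rel_def)
    ultimately show ?thesis using rtrancl_mono by blast
  qed
  then have "connected_graph (insert y W) (insert {x, y} T)"
    by (intro connected_graph_if_hub[of x]) (use xy(1) in auto)
  moreover have "card (insert {x, y} T) + 1 = card (insert y W)"
    using fW fT new_edge xy(2) sub(5) by simp
  moreover have "insert y W \<subseteq> V" "insert {x, y} T \<subseteq> E" "\<forall>e\<in>insert {x, y} T. e \<subseteq> insert y W"
    using sub(1-3) xy by auto
  ultimately have "is_subtree V E (insert y W) (insert {x, y} T)"
    unfolding is_subtree_def by blast
  moreover have "card (insert y W) = Suc (card W)" using fW xy(2) by simp
  ultimately show thesis using that by blast
qed

lemma exists_spanning_subtree:
  assumes g: "graph V E" and c: "connected_graph V E"
  obtains T where "is_subtree V E V T"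
proof -
  have fV: "finite V" using g by (simp add: graph_def)
  have grow: "\<exists>W T. is_subtree V E W T \<and> card W = Suc m" if "Suc m \<le> card V" for m
    using that
  proof (induction m)
    case 0
    obtain v where "v \<in> V" using c unfolding connected_graph_def by blast
    then have "is_subtree V E {v} {}"
      unfolding is_subtree_def connected_graph_def by simp
    then show ?case by fastforce
  next
    case (Suc m)
    then obtain W T where t: "is_subtree V E W T" and "card W = Suc m" by auto
    then have "W \<noteq> V" using Suc.prems by auto
    then show ?case using is_subtree_extend[OF g c t] \<open>card W = Suc m\<close> by metis
  qed
  have "V \<noteq> {}" using c by (simp add: connected_graph_def)
  then have "Suc (card V - 1) = card V" using fV by (simp add: card_gt_0_iff)
  then obtain W T where t: "is_subtree V E W T" and "card W = card V"
    using grow[of "card V - 1"] by auto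
  then have "W = V" using card_subset_eq[OF fV] unfolding is_subtree_def by blast
  then show thesis using that t by blast
qed

lemma is_subtree_edge_at:
  assumes "is_subtree V E W T" "x \<in> W" "y \<in> W" "x \<noteq> y"
  shows "\<exists>z. {x, z} \<in> T"
proof -
  have "(x, y) \<in> (adj_rel T)\<^sup>*"
    using assms unfolding is_subtree_def connected_graph_def by blast
  then show ?thesis
    using \<open>x \<noteq> y\<close> by (cases rule: converse_rtranclE) auto
qed

lemma k_proper_coloring_if_spanning_subtree:
  "is_subtree V E V T \<Longrightarrow> proper_edges c T \<Longrightarrow> k_proper_coloring k V E c"
  unfolding k_proper_coloring_def by blast

lemma proper_index_le:
  "k_proper_coloring k V E c \<Longrightarrow> proper_index k V E \<le> card (c ` E)"
  unfolding proper_index_def by (rule Least_le) blast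

lemma proper_index_attained:
  assumes "k_proper_coloring k V E c"
  obtains c' where "k_proper_coloring k V E c'" "proper_index k V E = card (c' ` E)"
proof -
  let ?P = "\<lambda>m. \<exists>c. k_proper_coloring k V E c \<and> card (c ` E) = m"
  have "?P (card (c ` E))" using assms by blast
  then have "?P (Least ?P)" by (rule LeastI[where P = ?P])
  then obtain c' where "k_proper_coloring k V E c'" "card (c' ` E) = Least ?P"
    by blast
  then show thesis using that[of c'] by (simp add: proper_index_def)
qed

lemma proper_edges_inj_on: "inj_on c T \<Longrightarrow> proper_edges c T"
  unfolding proper_edges_def by (auto dest: inj_onD)

lemma proper_edges_merge_disjoint:
  assumes "finite T" "e1 \<in> T" "e2 \<in> T" "e1 \<inter> e2 = {}" "e1 \<noteq> e2"
  obtains c :: "'a set \<Rightarrow> nat" where "proper_edges c T" "range c \<subseteq> {..<card T - 1}"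
proof -
  obtain h where h: "bij_betw h (T - {e2}) {..<card (T - {e2})}"
    using ex_bij_betw_finite_nat[of "T - {e2}"] assms(1) by (auto simp: atLeast0LessThan)
  define c where "c e = h (if e \<in> T - {e2} then e else e1)" for e
  have inj: "inj_on h (T - {e2})" using h by (simp add: bij_betw_def)
  have "proper_edges c T"
    unfolding proper_edges_def
  proof (intro ballI impI)
    fix a b assume ab: "a \<in> T" "b \<in> T" "a \<noteq> b \<and> a \<inter> b \<noteq> {}"
    let ?a = "if a \<in> T - {e2} then a else e1" and ?b = "if b \<in> T - {e2} then b else e1"
    have "?a \<noteq> ?b" using ab assms(4) by auto
    moreover have "?a \<in> T - {e2}" "?b \<in> T - {e2}" using ab assms(2,5) by auto
    ultimately show "c a \<noteq> c b"
      unfolding c_def using inj_on_eq_iff[OF inj] by blast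
  qed
  moreover have "range c \<subseteq> {..<card T - 1}"
  proof -
    have "(if e \<in> T - {e2} then e else e1) \<in> T - {e2}" for e
      using assms(2,5) by simp
    then have "range c \<subseteq> h ` (T - {e2})"
      unfolding c_def by blast
    also have "\<dots> = {..<card T - 1}"
      using h assms(1,3) by (simp add: bij_betw_def)
    finally show ?thesis .
  qed
  ultimately show thesis using that by blast
qed

lemma proper_index_le_if_disjoint_tree_edges:
  assumes g: "graph V E" and t: "is_subtree V E V T"
    and "e1 \<in> T" "e2 \<in> T" "e1 \<inter> e2 = {}" "e1 \<noteq> e2"
  shows "proper_index k V E \<le> card V - 2"
proof -
  have "finite T" "card T + 1 = card V"
    using t graph_finite_edges[OF g] finite_subset unfolding is_subtree_def by auto
  obtain c :: "'a set \<Rightarrow> nat" where "proper_edges c T" and range: "range c \<subseteq> {..<card T - 1}"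
    using proper_edges_merge_disjoint[OF \<open>finite T\<close> assms(3-6)] by blast
  then have "proper_index k V E \<le> card (c ` E)"
    by (intro proper_index_le k_proper_coloring_if_spanning_subtree[OF t])
  also have "\<dots> \<le> card {..<card T - 1}"
    using range by (intro card_mono) auto
  finally show ?thesis using \<open>card T + 1 = card V\<close> by simp
qed

definition star_at :: "'a set \<Rightarrow> 'a set set \<Rightarrow> 'a \<Rightarrow> bool" where
  "star_at V E z \<longleftrightarrow> z \<in> V \<and> (\<forall>x\<in>V. x \<noteq> z \<longrightarrow> {z, x} \<in> E) \<and> (\<forall>e\<in>E. z \<in> e)"

lemma star_atD:
  assumes "star_at V E z"
  shows "z \<in> V" "\<And>x. x \<in> V \<Longrightarrow> x \<noteq> z \<Longrightarrow> {z, x} \<in> E" "\<And>e. e \<in> E \<Longrightarrow> z \<in> e"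
  using assms unfolding star_at_def by auto

lemma star_at_edge_iff:
  assumes g: "graph V E" and st: "star_at V E z" and "x \<in> V" "y \<in> V"
  shows "{x, y} \<in> E \<longleftrightarrow> x \<noteq> y \<and> (x = z \<or> y = z)"
proof
  assume e: "{x, y} \<in> E"
  obtain a b where "{x, y} = {a, b}" "a \<noteq> b"
    using graph_edge_doubleton[OF g e] by blast
  then have "x \<noteq> y" by (auto simp: doubleton_eq_iff)
  moreover have "z \<in> {x, y}" using star_atD(3)[OF st e] .
  ultimately show "x \<noteq> y \<and> (x = z \<or> y = z)" by blast
next
  assume "x \<noteq> y \<and> (x = z \<or> y = z)"
  then consider "x = z" "y \<noteq> z" | "y = z" "x \<noteq> z" by blast
  then show "{x, y} \<in> E"
  proof cases
    case 1
    then show ?thesis using star_atD(2)[OF st, of y] \<open>y \<in> V\<close> by simp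
  next
    case 2
    then show ?thesis using star_atD(2)[OF st, of x] \<open>x \<in> V\<close> by (simp add: insert_commute)
  qed
qed

lemma star_at_edges_eq:
  assumes g: "graph V E" and st: "star_at V E z"
  shows "E = (\<lambda>x. {z, x}) ` (V - {z})"
proof
  show "(\<lambda>x. {z, x}) ` (V - {z}) \<subseteq> E"
    using star_atD(2)[OF st] by blast
next
  show "E \<subseteq> (\<lambda>x. {z, x}) ` (V - {z})"
  proof
    fix e assume e: "e \<in> E"
    then obtain a b where ab: "e = {a, b}" "a \<noteq> b" "a \<in> V" "b \<in> V"
      using graph_edge_doubleton[OF g e] by blast
    moreover have "z \<in> e" using star_atD(3)[OF st e] .
    ultimately show "e \<in> (\<lambda>x. {z, x}) ` (V - {z})"
      by (auto simp: insert_commute)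
  qed
qed

lemma star_at_card_edges:
  assumes g: "graph V E" and st: "star_at V E z"
  shows "card E = card V - 1"
proof -
  have "inj_on (\<lambda>x. {z, x}) (V - {z})"
    by (rule inj_onI) (auto simp: doubleton_eq_iff)
  then show ?thesis
    using star_at_edges_eq[OF assms] star_atD(1)[OF st] g by (simp add: card_image graph_def)
qed

lemma star_at_subtree_leaf_edge:
  assumes g: "graph V E" and st: "star_at V E z" and t: "is_subtree V E W T"
    and "w \<in> W" "w \<noteq> z" "w' \<in> W" "w \<noteq> w'"
  shows "{w, z} \<in> T"
proof -
  obtain p where p: "{w, p} \<in> T" using is_subtree_edge_at[OF t \<open>w \<in> W\<close> \<open>w' \<in> W\<close> \<open>w \<noteq> w'\<close>] by blast
  moreover have "T \<subseteq> E" "W \<subseteq> V" using t unfolding is_subtree_def by auto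
  moreover have "p \<in> V"
    using p t graph_edge_subset[OF g] unfolding is_subtree_def by blast
  ultimately have "p = z"
    using star_at_edge_iff[OF g st, of w p] \<open>w \<in> W\<close> \<open>w \<noteq> z\<close> by blast
  then show ?thesis using p by simp
qed

lemma star_at_k_proper_coloring_inj:
  assumes g: "graph V E" and st: "star_at V E z"
    and "2 \<le> k" "k \<le> card V" and ck: "k_proper_coloring k V E c"
  shows "inj_on c E"
proof (rule inj_onI, rule ccontr)
  fix e1 e2 assume e: "e1 \<in> E" "e2 \<in> E" "c e1 = c e2" "e1 \<noteq> e2"
  obtain x y where x: "x \<in> V - {z}" "e1 = {z, x}" and y: "y \<in> V - {z}" "e2 = {z, y}"
    using e(1,2) star_at_edges_eq[OF g st] by blast
  have "x \<noteq> y" using x y e(4) by blast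
  have "finite V" using g by (simp add: graph_def)
  moreover have "{x, y} \<subseteq> V" "card {x, y} \<le> k" using x y \<open>x \<noteq> y\<close> \<open>2 \<le> k\<close> by auto
  ultimately obtain S where "{x, y} \<subseteq> S" "S \<subseteq> V" "card S = k"
    using \<open>k \<le> card V\<close> by (rule ex_subset_card_between)
  then obtain W T where t: "is_subtree V E W T" and "{x, y} \<subseteq> W"
    and pr: "proper_edges c T"
    using ck[unfolded k_proper_coloring_def, rule_format, of S] by blast
  then have "x \<in> W" "y \<in> W" by auto
  have "{x, z} \<in> T" "{y, z} \<in> T"
    using star_at_subtree_leaf_edge[OF g st t] x y \<open>x \<in> W\<close> \<open>y \<in> W\<close> \<open>x \<noteq> y\<close> by auto
  then have "e1 \<in> T" "e2 \<in> T"
    using x(2) y(2) by (simp_all add: insert_commute)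
  moreover have "e1 \<inter> e2 \<noteq> {}" using x y by auto
  ultimately show False
    using pr e(3,4) unfolding proper_edges_def by blast
qed

lemma proper_index_star_at:
  assumes g: "graph V E" and c: "connected_graph V E" and st: "star_at V E z"
    and "2 \<le> k" "k \<le> card V"
  shows "proper_index k V E = card V - 1"
proof -
  obtain h :: "'a set \<Rightarrow> nat" where "inj_on h E"
    using ex_bij_betw_finite_nat[OF graph_finite_edges[OF g]] by (auto simp: bij_betw_def)
  moreover have "is_subtree V E V E"
    using c graph_edge_subset[OF g] star_at_card_edges[OF g st] \<open>2 \<le> k\<close> \<open>k \<le> card V\<close>
    unfolding is_subtree_def by auto
  ultimately have "k_proper_coloring k V E h"
    by (intro k_proper_coloring_if_spanning_subtree proper_edges_inj_on)
  then obtain c' where "k_proper_coloring k V E c'" "proper_index k V E = card (c' ` E)"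
    by (rule proper_index_attained)
  moreover have "inj_on c' E"
    using star_at_k_proper_coloring_inj[OF g st \<open>2 \<le> k\<close> \<open>k \<le> card V\<close>] calculation(1) .
  ultimately show ?thesis
    using star_at_card_edges[OF g st] by (simp add: card_image)
qed

lemma star_edges_iff:
  "{a, b} \<in> star_edges n \<longleftrightarrow> a \<noteq> b \<and> (a = 0 \<or> b = 0) \<and> a < n \<and> b < n"
proof
  assume "{a, b} \<in> star_edges n"
  then obtain i where "{a, b} = {0, i}" "0 < i" "i < n"
    unfolding star_edges_def by blast
  then show "a \<noteq> b \<and> (a = 0 \<or> b = 0) \<and> a < n \<and> b < n"
    by (auto simp: doubleton_eq_iff)
next
  assume h: "a \<noteq> b \<and> (a = 0 \<or> b = 0) \<and> a < n \<and> b < n"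
  then have "{a, b} = {0, max a b} \<and> 0 < max a b \<and> max a b < n"
    by (auto simp: max_def insert_commute)
  then show "{a, b} \<in> star_edges n"
    unfolding star_edges_def by blast
qed

lemma graph_iso_star_imp_star_at:
  assumes g: "graph V E" and "0 < n"
    and "graph_iso V E (star_vertices n) (star_edges n)"
  shows "\<exists>z. star_at V E z"
proof -
  obtain f where bij: "bij_betw f V {0..<n}"
    and iff: "\<And>x y. x \<in> V \<Longrightarrow> y \<in> V \<Longrightarrow> {x, y} \<in> E \<longleftrightarrow> {f x, f y} \<in> star_edges n"
    using assms(3) unfolding graph_iso_def star_vertices_def by blast
  have inj: "inj_on f V" and img: "f ` V = {0..<n}"
    using bij unfolding bij_betw_def by auto
  obtain z where z: "z \<in> V" "f z = 0"
    using img \<open>0 < n\<close> by (metis atLeastLessThan_iff imageE le0)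
  have "{z, x} \<in> E" if "x \<in> V" "x \<noteq> z" for x
  proof -
    have "f x \<noteq> f z" "f x < n"
      using inj_on_eq_iff[OF inj] that z(1) img by auto
    then show ?thesis
      using iff[OF z(1) that(1)] z(2) \<open>0 < n\<close> by (simp add: star_edges_iff)
  qed
  moreover have "z \<in> e" if e: "e \<in> E" for e
  proof -
    obtain a b where ab: "e = {a, b}" "a \<in> V" "b \<in> V"
      using graph_edge_doubleton[OF g e] by blast
    then have "f a = 0 \<or> f b = 0"
      using iff[OF ab(2,3)] e by (simp add: star_edges_iff)
    then have "a = z \<or> b = z"
      using inj_on_eq_iff[OF inj] ab(2,3) z by metis
    then show ?thesis using ab(1) by blast
  qed
  ultimately show ?thesis
    using z(1) unfolding star_at_def by blast
qed

lemma star_at_imp_graph_iso: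
  assumes g: "graph V E" and st: "star_at V E z" and "card V = n"
  shows "graph_iso V E (star_vertices n) (star_edges n)"
proof -
  have fV: "finite V" using g by (simp add: graph_def)
  have zV: "z \<in> V" using star_atD(1)[OF st] .
  have "0 < n" using \<open>card V = n\<close> fV zV card_gt_0_iff by blast
  have "card (V - {z}) = card {1..<n}" using \<open>card V = n\<close> fV zV by simp
  then obtain h where h: "bij_betw h (V - {z}) {1..<n}"
    using finite_same_card_bij fV by blast
  define f where "f = h(z := 0)"
  have "bij_betw f (V - {z}) {1..<n} = bij_betw h (V - {z}) {1..<n}"
    by (rule bij_betw_cong) (simp add: f_def)
  with h have "bij_betw f (V - {z}) {1..<n}" by simp
  then have "bij_betw f ((V - {z}) \<union> {z}) ({1..<n} \<union> {0})"
    using notIn_Un_bij_betw[of z "V - {z}" f "{1..<n}"] by (simp add: f_def)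
  moreover have "(V - {z}) \<union> {z} = V" using zV by blast
  moreover have "{1..<n} \<union> {0} = {0..<n}" using \<open>0 < n\<close> by auto
  ultimately have bij: "bij_betw f V {0..<n}" by simp
  have f_zero: "f x = 0 \<longleftrightarrow> x = z" if "x \<in> V" for x
  proof (cases "x = z")
    case False
    then have "h x \<in> {1..<n}" using bij_betwE[OF h] that by blast
    then show ?thesis using False by (simp add: f_def)
  qed (simp add: f_def)
  have "{x, y} \<in> E \<longleftrightarrow> {f x, f y} \<in> star_edges n" if "x \<in> V" "y \<in> V" for x y
  proof -
    have "f x < n" "f y < n" "f x = f y \<longleftrightarrow> x = y"
      using bij that by (auto simp: bij_betw_def inj_on_eq_iff)
    then show ?thesis
      using star_at_edge_iff[OF g st that] f_zero[OF that(1)] f_zero[OF that(2)]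
      by (simp add: star_edges_iff)
  qed
  then show ?thesis
    using bij unfolding graph_iso_def star_vertices_def by blast
qed

lemma doubleton_subset_if_meets_triangle:
  assumes "a \<noteq> b" "b \<noteq> c" "a \<noteq> c"
    and "e \<inter> {a, b} \<noteq> {}" "e \<inter> {b, c} \<noteq> {}" "e \<inter> {a, c} \<noteq> {}" "e = {x, y}"
  shows "e \<subseteq> {a, b, c}"
  using assms by blast

lemma intersecting_doubletons_common_vertex:
  assumes doubletons: "\<And>e. e \<in> T \<Longrightarrow> \<exists>a b. e = {a, b} \<and> a \<noteq> b"
    and intersecting: "\<And>e e'. e \<in> T \<Longrightarrow> e' \<in> T \<Longrightarrow> e \<inter> e' \<noteq> {}"
    and "e0 \<in> T" and "finite W" "4 \<le> card W" "W \<subseteq> \<Union>T"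
  shows "\<exists>v. \<forall>e\<in>T. v \<in> e"
proof (rule ccontr)
  assume no_common: "\<nexists>v. \<forall>e\<in>T. v \<in> e"
  obtain a b where e0: "e0 = {a, b}" "a \<noteq> b" using doubletons[OF \<open>e0 \<in> T\<close>] by blast
  obtain e2 where e2: "e2 \<in> T" "a \<notin> e2" using no_common by blast
  obtain e3 where e3: "e3 \<in> T" "b \<notin> e3" using no_common by blast
  obtain c where c: "e2 = {b, c}" "c \<noteq> a" "c \<noteq> b"
    using doubletons[OF e2(1)] intersecting[OF \<open>e0 \<in> T\<close> e2(1)] e0 e2(2) by blast
  obtain d where d: "e3 = {a, d}" "d \<noteq> a" "d \<noteq> b"
    using doubletons[OF e3(1)] intersecting[OF \<open>e0 \<in> T\<close> e3(1)] e0 e3(2) by blast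
  have "d = c" using intersecting[OF e2(1) e3(1)] c d e0 by blast
  have "e \<subseteq> {a, b, c}" if e: "e \<in> T" for e
  proof -
    obtain x y where "e = {x, y}" using doubletons[OF e] by blast
    then show ?thesis
      using doubleton_subset_if_meets_triangle[OF e0(2) c(3)[symmetric] c(2)[symmetric]]
        intersecting[OF e] \<open>e0 \<in> T\<close> e2(1) e3(1) e0(1) c(1) d(1) \<open>d = c\<close> by metis
  qed
  then have "W \<subseteq> {a, b, c}" using \<open>W \<subseteq> \<Union>T\<close> by blast
  then have "card W \<le> card {a, b, c}" by (intro card_mono) auto
  also have "\<dots> \<le> 3" by (simp add: card_insert_if)
  finally show False using \<open>4 \<le> card W\<close> by simp
qed

lemma dominating_vertex_disjoint_tree_edges:
  assumes g: "graph V E" and "v \<in> V" and dom: "\<And>x. x \<in> V \<Longrightarrow> x \<noteq> v \<Longrightarrow> {v, x} \<in> E"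
    and uw: "{u, w} \<in> E" "v \<notin> {u, w}" and "4 \<le> card V"
  shows "\<exists>T e1 e2. is_subtree V E V T \<and> e1 \<in> T \<and> e2 \<in> T \<and> e1 \<inter> e2 = {} \<and> e1 \<noteq> e2"
proof -
  have fV: "finite V" using g by (simp add: graph_def)
  have "u \<in> V" "w \<in> V" "u \<noteq> w"
    using graph_edge_doubleton[OF g uw(1)] by (auto simp: doubleton_eq_iff)
  have "\<not> V \<subseteq> {v, u, w}"
  proof
    assume "V \<subseteq> {v, u, w}"
    then have "card V \<le> card {v, u, w}" by (intro card_mono) auto
    also have "\<dots> \<le> 3" by (simp add: card_insert_if)
    finally show False using \<open>4 \<le> card V\<close> by simp
  qed
  then obtain x where x: "x \<in> V" "x \<notin> {v, u, w}" by blast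
  define S where "S = (\<lambda>y. {v, y}) ` (V - {v, w})"
  define T where "T = insert {u, w} S"
  have "(a, v) \<in> (adj_rel T)\<^sup>*" if "a \<in> V" for a
  proof -
    have to_v: "(y, v) \<in> adj_rel T" if "y \<in> V - {v, w}" for y
      using that by (simp add: T_def S_def insert_commute)
    consider "a = v" | "a = w" | "a \<in> V - {v, w}" using \<open>a \<in> V\<close> by blast
    then show ?thesis
    proof cases
      case 2
      have "(w, u) \<in> adj_rel T" by (simp add: T_def insert_commute)
      moreover have "(u, v) \<in> adj_rel T" using to_v \<open>u \<in> V\<close> uw(2) \<open>u \<noteq> w\<close> by blast
      ultimately show ?thesis using 2 by (meson converse_rtrancl_into_rtrancl r_into_rtrancl)
    qed (use to_v in auto)
  qed
  then have "connected_graph V T" by (rule connected_graph_if_hub[OF \<open>v \<in> V\<close>])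
  moreover have "T \<subseteq> E" "\<forall>e\<in>T. e \<subseteq> V"
    using uw(1) dom \<open>v \<in> V\<close> \<open>u \<in> V\<close> \<open>w \<in> V\<close> unfolding T_def S_def by auto
  moreover have "card T + 1 = card V"
  proof -
    have "inj_on (\<lambda>y. {v, y}) (V - {v, w})"
      by (rule inj_onI) (auto simp: doubleton_eq_iff)
    then have "card S = card V - 2"
      using fV \<open>v \<in> V\<close> \<open>w \<in> V\<close> uw(2) by (simp add: S_def card_image card_Diff_subset)
    moreover have "{u, w} \<notin> S" using uw(2) by (auto simp: S_def doubleton_eq_iff)
    ultimately show ?thesis
      using fV \<open>4 \<le> card V\<close> by (simp add: T_def S_def)
  qed
  ultimately have "is_subtree V E V T" unfolding is_subtree_def by blast
  moreover have "{v, x} \<in> T" "{u, w} \<in> T" using x by (auto simp: T_def S_def)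
  moreover have "{v, x} \<inter> {u, w} = {}" "{v, x} \<noteq> {u, w}" using x uw(2) by auto
  ultimately show ?thesis by blast
qed

lemma spanning_subtree_intersecting_edges_dominating_vertex:
  assumes g: "graph V E" and t: "is_subtree V E V T" and "4 \<le> card V"
    and intersecting: "\<And>e e'. e \<in> T \<Longrightarrow> e' \<in> T \<Longrightarrow> e \<inter> e' \<noteq> {}"
  obtains v where "v \<in> V" "\<And>x. x \<in> V \<Longrightarrow> x \<noteq> v \<Longrightarrow> {v, x} \<in> E"
proof -
  have TE: "T \<subseteq> E" and "card T + 1 = card V" using t unfolding is_subtree_def by auto
  have fV: "finite V" using g by (simp add: graph_def)
  have doubletons: "\<And>e. e \<in> T \<Longrightarrow> \<exists>a b. e = {a, b} \<and> a \<noteq> b"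
    using graph_edge_doubleton[OF g] TE by blast
  have "T \<noteq> {}" using \<open>card T + 1 = card V\<close> \<open>4 \<le> card V\<close> by auto
  then obtain e0 where "e0 \<in> T" by blast
  have "V \<subseteq> \<Union>T"
  proof
    fix x assume "x \<in> V"
    have "\<not> V \<subseteq> {x}"
    proof
      assume "V \<subseteq> {x}"
      then have "card V \<le> card {x}" by (intro card_mono) auto
      then show False using \<open>4 \<le> card V\<close> by simp
    qed
    then obtain y where "y \<in> V" "x \<noteq> y" by blast
    then obtain p where "{x, p} \<in> T" using is_subtree_edge_at[OF t \<open>x \<in> V\<close>] by blast
    then show "x \<in> \<Union>T" by blast
  qed
  then obtain v where v: "\<And>e. e \<in> T \<Longrightarrow> v \<in> e"
    using intersecting_doubletons_common_vertex[OF doubletons intersecting \<open>e0 \<in> T\<close> fV \<open>4 \<le> card V\<close>]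
    by metis
  have "v \<in> V" using v[OF \<open>e0 \<in> T\<close>] TE \<open>e0 \<in> T\<close> graph_edge_subset[OF g] by blast
  moreover have "{v, x} \<in> E" if x: "x \<in> V" "x \<noteq> v" for x
  proof -
    obtain p where p: "{x, p} \<in> T" using is_subtree_edge_at[OF t x(1) \<open>v \<in> V\<close> x(2)] by blast
    then have "p = v" using v[OF p] x(2) by blast
    then have "{x, v} \<in> E" using p TE by blast
    then show ?thesis by (simp add: insert_commute)
  qed
  ultimately show thesis using that by blast
qed

lemma spanning_subtree_disjoint_edges_if_not_star:
  assumes g: "graph V E" and c: "connected_graph V E" and "4 \<le> card V"
    and not_star: "\<nexists>z. star_at V E z"
  shows "\<exists>T e1 e2. is_subtree V E V T \<and> e1 \<in> T \<and> e2 \<in> T \<and> e1 \<inter> e2 = {} \<and> e1 \<noteq> e2"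
proof -
  obtain T where t: "is_subtree V E V T" using exists_spanning_subtree[OF g c] .
  show ?thesis
  proof (cases "\<exists>e1\<in>T. \<exists>e2\<in>T. e1 \<inter> e2 = {}")
    case True
    then obtain e1 e2 where "e1 \<in> T" "e2 \<in> T" "e1 \<inter> e2 = {}" by blast
    moreover have "e1 \<in> E" using t \<open>e1 \<in> T\<close> unfolding is_subtree_def by blast
    then have "e1 \<noteq> {}" using graph_edge_doubleton[OF g] by blast
    ultimately show ?thesis using t by blast
  next
    case False
    then have "\<And>e e'. e \<in> T \<Longrightarrow> e' \<in> T \<Longrightarrow> e \<inter> e' \<noteq> {}" by blast
    then obtain v where "v \<in> V" and dom: "\<And>x. x \<in> V \<Longrightarrow> x \<noteq> v \<Longrightarrow> {v, x} \<in> E"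
      using spanning_subtree_intersecting_edges_dominating_vertex[OF g t \<open>4 \<le> card V\<close>] by metis
    have "\<exists>e\<in>E. v \<notin> e"
    proof (rule ccontr)
      assume "\<not> (\<exists>e\<in>E. v \<notin> e)"
      then have "star_at V E v" using dom \<open>v \<in> V\<close> by (auto simp: star_at_def)
      then show False using not_star by blast
    qed
    then obtain e where "e \<in> E" "v \<notin> e" by blast
    then obtain u w where "e = {u, w}" using graph_edge_doubleton[OF g] by blast
    then have "{u, w} \<in> E" "v \<notin> {u, w}" using \<open>e \<in> E\<close> \<open>v \<notin> e\<close> by simp_all
    then show ?thesis
      using dominating_vertex_disjoint_tree_edges[OF g \<open>v \<in> V\<close> dom] \<open>4 \<le> card V\<close> by blast
  qed
qed

theorem mainTheorem16:
  fixes V :: "'a set" and E :: "'a set set" and n k :: nat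
  assumes "graph V E" and "connected_graph V E"
    and "card V = n" and "n \<ge> 4"
    and "3 \<le> k" and "k \<le> n"
  shows "proper_index k V E = n - 1 \<longleftrightarrow> graph_iso V E (star_vertices n) (star_edges n)"
proof (cases "\<exists>z. star_at V E z")
  case True
  then obtain z where st: "star_at V E z" by blast
  then show ?thesis
    using proper_index_star_at[OF assms(1,2) st] star_at_imp_graph_iso[OF assms(1) st] assms(3-6)
    by simp
next
  case False
  then have "\<not> graph_iso V E (star_vertices n) (star_edges n)"
    using graph_iso_star_imp_star_at[OF assms(1), of n] assms(4) by auto
  moreover obtain T e1 e2 where "is_subtree V E V T" "e1 \<in> T" "e2 \<in> T" "e1 \<inter> e2 = {}" "e1 \<noteq> e2"
    using spanning_subtree_disjoint_edges_if_not_star[OF assms(1,2)] False assms(3,4) by auto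
  then have "proper_index k V E \<le> n - 2"
    using proper_index_le_if_disjoint_tree_edges[OF assms(1)] assms(3) by blast
  ultimately show ?thesis using assms(4) by simp
qed

end
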